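(* Let $\mathcal{X}\subseteq\mathbb{R}^d$ be nonempty, closed and convex, and let $f=\frac1n\sum_{i=1}^nf_i$ with each $f_i:\mathbb{R}^d\to\mathbb{R}$ differentiable; assume $\operatorname{arg\,min}_{x\in\mathcal{X}}f(x)$ is nonempty and that each $f_i$ has a constrained minimizer $x_{\star,i}\in\operatorname{arg\,min}_{x\in\mathcal{X}}f_i(x)$. Let $x_k\in\mathcal{X}$, let $i_k\in\{1,\dots,n\}$ be a given (realized) index and $g_{i_k}:=\nabla f_{i_k}(x_k)$. Assume $g_{i_k}\ne0$ and $0<t_k\le\frac{\langle g_{i_k},x_k-x_{\star,i_k}\rangle}{\|g_{i_k}\|}$, and let $x_{k+1}\in\operatorname{arg\,min}_{z\in\mathcal{X}\cap\mathcal{B}(x_k,t_k)}\langle g_{i_k},z\rangle$. Then $t_k\le\|x_k-x_{\star,i_k}\|$, $\|x_{k+1}-x_k\|=t_k$, and $\|x_{k+1}-x_{\star,i_k}\|^2\le\|x_k-x_{\star,i_k}\|^2-t_k^2$.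
   Context: $\|\cdot\|$ is the Euclidean norm, $\mathcal{B}(x,t):=\{y:\|y-x\|\le t\}$. *)

theory Defs
  imports "HOL-Analysis.Analysis"
begin

definition argmin_on :: "'a set \<Rightarrow> ('a \<Rightarrow> real) \<Rightarrow> 'a set" where
  "argmin_on S h = {x \<in> S. \<forall>y\<in>S. h x \<le> h y}"

end

theory Submission
  imports Defs
begin

text \<open>
  Write \<open>v = y - x\<close> for the step and \<open>a\<close> for the minimizer of the sampled function, so that
  \<open>\<langle>g, a\<rangle> \<le> \<langle>g, x\<rangle> - t \<parallel>g\<parallel> \<le> \<langle>g, y\<rangle>\<close>. If equality holds, \<open>y\<close> also minimizes \<open>\<langle>g, \<cdot>\<rangle>\<close> over the
  whole ball, so \<open>v = -(t / \<parallel>g\<parallel>) g\<close>. Otherwise every point of the segment from \<open>y\<close> towards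
  \<open>a\<close> lies in \<open>X\<close> and strictly improves the objective, so it must leave the ball at once;
  this forces \<open>\<parallel>v\<parallel> = t\<close> and \<open>\<langle>v, a - y\<rangle> \<ge> 0\<close>. Either way \<open>\<langle>v, a - x\<rangle> \<ge> t\<^sup>2\<close>, and expanding
  \<open>\<parallel>(x - a) + v\<parallel>\<^sup>2\<close> gives the descent inequality.
\<close>

lemma inner_le_neg_norm_imp_eq:
  fixes g v :: "'a::real_inner"
  assumes v: "norm v \<le> t" and gv: "g \<bullet> v \<le> - t * norm g"
  shows "norm g *\<^sub>R v = - t *\<^sub>R g"
proof -
  have t: "0 \<le> t" using v norm_ge_zero order_trans by blast
  have g2: "norm g * norm g = g \<bullet> g" by (metis power2_eq_square power2_norm_eq_inner)
  have "(norm (norm g *\<^sub>R v + t *\<^sub>R g))\<^sup>2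
      = (norm g)\<^sup>2 * (norm v)\<^sup>2 + 2 * (t * norm g) * (g \<bullet> v) + t\<^sup>2 * (norm g)\<^sup>2"
    unfolding power2_norm_eq_inner
    by (simp add: inner_add_left inner_add_right inner_commute[of v g] power2_eq_square g2
        algebra_simps)
  also have "\<dots> \<le> (norm g)\<^sup>2 * t\<^sup>2 + 2 * (t * norm g) * (- t * norm g) + t\<^sup>2 * (norm g)\<^sup>2"
    using v gv t by (intro add_mono mult_left_mono power_mono) auto
  also have "\<dots> = 0" by (simp add: power2_eq_square)
  finally have "norm g *\<^sub>R v + t *\<^sub>R g = 0" by simp
  then show ?thesis by (simp add: add_eq_0_iff2)
qed

lemma eventually_norm_add_scaleR_le:
  fixes v w :: "'a::real_inner"
  assumes v: "norm v \<le> t" and inside_or_inward: "norm v < t \<or> v \<bullet> w < 0"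
  shows "eventually (\<lambda>s. norm (v + s *\<^sub>R w) \<le> t) (at_right 0)"
  using inside_or_inward
proof
  assume "norm v < t"
  moreover have "((\<lambda>s. norm (v + s *\<^sub>R w)) \<longlongrightarrow> norm v) (at_right 0)"
    by (auto intro!: tendsto_eq_intros)
  ultimately have "eventually (\<lambda>s. norm (v + s *\<^sub>R w) < t) (at_right 0)"
    by (rule order_tendstoD(2)[rotated])
  then show ?thesis by eventually_elim simp
next
  assume vw: "v \<bullet> w < 0"
  have "((\<lambda>s. 2 * (v \<bullet> w) + s * (norm w)\<^sup>2) \<longlongrightarrow> 2 * (v \<bullet> w)) (at_right 0)"
    by (auto intro!: tendsto_eq_intros)
  then have "eventually (\<lambda>s. 2 * (v \<bullet> w) + s * (norm w)\<^sup>2 < 0) (at_right 0)"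
    using vw by (auto dest: order_tendstoD(2)[where a = 0])
  with eventually_at_right_less show ?thesis
  proof eventually_elim
    case (elim s)
    have "(norm (v + s *\<^sub>R w))\<^sup>2 = (norm v)\<^sup>2 + s * (2 * (v \<bullet> w) + s * (norm w)\<^sup>2)"
      unfolding power2_norm_eq_inner
      by (simp add: inner_add_left inner_add_right inner_commute[of w v] algebra_simps)
    also have "\<dots> < (norm v)\<^sup>2" using elim by (simp add: mult_pos_neg)
    also have "\<dots> \<le> t\<^sup>2" using v by (simp add: power_mono)
    finally show ?case
      using v norm_ge_zero order_trans by (blast intro: power2_le_imp_le less_imp_le)
  qed
qed

lemma argmin_inner_cball_step:
  fixes g x y a :: "'a::real_inner"
  assumes X: "convex X" and a: "a \<in> X" and g: "g \<noteq> 0"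
    and descent: "t * norm g \<le> g \<bullet> (x - a)"
    and y: "y \<in> argmin_on (X \<inter> cball x t) (\<lambda>z. g \<bullet> z)"
  shows "norm (y - x) = t \<and> t\<^sup>2 \<le> (y - x) \<bullet> (a - x)"
proof -
  define v where "v = y - x"
  have yX: "y \<in> X" and v_le: "norm v \<le> t"
    using y by (auto simp: argmin_on_def v_def dist_norm norm_minus_commute)
  have y_min: "g \<bullet> y \<le> g \<bullet> z" if "z \<in> X" "norm (z - x) \<le> t" for z
    using y that by (auto simp: argmin_on_def dist_norm norm_minus_commute)
  have gy: "g \<bullet> y = g \<bullet> x + g \<bullet> v" by (simp add: v_def inner_diff_right)
  have ga: "g \<bullet> a \<le> g \<bullet> x - t * norm g"
    using descent by (simp add: inner_diff_right)
  have "- (norm g * norm v) \<le> g \<bullet> v"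
    using norm_cauchy_schwarz[of "-g" v] by simp
  moreover have "norm g * norm v \<le> t * norm g"
    using mult_right_mono[OF v_le norm_ge_zero[of g]] by (simp add: mult.commute)
  ultimately have "g \<bullet> a \<le> g \<bullet> y" using ga gy by linarith
  then consider "g \<bullet> a = g \<bullet> y" | "g \<bullet> a < g \<bullet> y" by linarith
  then have "norm v = t \<and> t\<^sup>2 \<le> v \<bullet> (a - x)"
  proof cases
    case 1
    have t: "0 \<le> t" using v_le norm_ge_zero order_trans by blast
    have "g \<bullet> v \<le> - t * norm g" using 1 ga gy by linarith
    from inner_le_neg_norm_imp_eq[OF v_le this]
    have eq: "norm g *\<^sub>R v = - t *\<^sub>R g" .
    have "norm g * norm v = norm g * t"
      using arg_cong[OF eq, of norm] t by (simp add: mult.commute)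
    then have norm_v: "norm v = t" using g by simp
    have "norm g * t\<^sup>2 \<le> t * (g \<bullet> (x - a))"
      using mult_left_mono[OF descent t] by (simp add: power2_eq_square mult_ac)
    also have "\<dots> = norm g * (v \<bullet> (a - x))"
      using arg_cong[OF eq, of "\<lambda>u. u \<bullet> (a - x)"] by (simp add: inner_diff_right right_diff_distrib)
    finally show ?thesis using norm_v g by simp
  next
    case 2
    define w where "w = a - y"
    have leaves_ball: "\<not> norm (v + s *\<^sub>R w) \<le> t" if s: "0 < s" "s \<le> 1" for s
    proof
      assume "norm (v + s *\<^sub>R w) \<le> t"
      moreover have "(1 - s) *\<^sub>R y + s *\<^sub>R a \<in> X"
        using X yX a s by (simp add: convex_def)
      moreover have "(1 - s) *\<^sub>R y + s *\<^sub>R a - x = v + s *\<^sub>R w"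
        by (simp add: v_def w_def algebra_simps)
      ultimately have "g \<bullet> y \<le> g \<bullet> ((1 - s) *\<^sub>R y + s *\<^sub>R a)" by (metis y_min)
      then have "0 \<le> s * (g \<bullet> a - g \<bullet> y)"
        by (simp add: inner_add_right inner_scaleR_right algebra_simps)
      with mult_pos_neg[OF s(1), of "g \<bullet> a - g \<bullet> y"] 2 show False by linarith
    qed
    have "\<not> (norm v < t \<or> v \<bullet> w < 0)"
    proof
      assume "norm v < t \<or> v \<bullet> w < 0"
      from eventually_norm_add_scaleR_le[OF v_le this]
      obtain b where "b > 0" "\<And>s. 0 < s \<Longrightarrow> s < b \<Longrightarrow> norm (v + s *\<^sub>R w) \<le> t"
        by (auto simp: eventually_at_right_field)
      with leaves_ball[of "min (b / 2) 1"] show False by simp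
    qed
    moreover have "v \<bullet> (a - x) = (norm v)\<^sup>2 + v \<bullet> w"
      by (simp add: v_def w_def power2_norm_eq_inner inner_diff_right)
    ultimately show ?thesis using v_le by simp
  qed
  then show ?thesis by (simp add: v_def)
qed

theorem theorem10:
  fixes X :: "'a::euclidean_space set"
    and fs :: "nat \<Rightarrow> 'a \<Rightarrow> real"
    and n :: nat
    and xstar :: "nat \<Rightarrow> 'a"
    and xk xk1 g :: 'a
    and ik :: nat
    and tk :: real
  assumes X_ne: "X \<noteq> {}" and X_closed: "closed X" and X_convex: "convex X"
    and diff: "\<And>i x. i \<in> {1..n} \<Longrightarrow> fs i differentiable (at x)"
    and argmin_f_ne: "argmin_on X (\<lambda>x. (1 / real n) * (\<Sum>i=1..n. fs i x)) \<noteq> {}"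
    and xstar: "\<And>i. i \<in> {1..n} \<Longrightarrow> xstar i \<in> argmin_on X (fs i)"
    and xk: "xk \<in> X"
    and ik: "ik \<in> {1..n}"
    and grad: "(fs ik has_derivative (\<lambda>h. g \<bullet> h)) (at xk)"
    and g_ne: "g \<noteq> 0"
    and tk_pos: "0 < tk"
    and tk_le: "tk \<le> (g \<bullet> (xk - xstar ik)) / norm g"
    and xk1: "xk1 \<in> argmin_on (X \<inter> cball xk tk) (\<lambda>z. g \<bullet> z)"
  shows "tk \<le> norm (xk - xstar ik)
       \<and> norm (xk1 - xk) = tk
       \<and> (norm (xk1 - xstar ik))\<^sup>2 \<le> (norm (xk - xstar ik))\<^sup>2 - tk\<^sup>2"
proof -
  define a where "a = xstar ik"
  have a: "a \<in> X" using xstar[OF ik] by (simp add: a_def argmin_on_def)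
  have descent: "tk * norm g \<le> g \<bullet> (xk - a)"
    using tk_le g_ne by (simp add: a_def pos_le_divide_eq)
  have "tk * norm g \<le> norm (xk - a) * norm g"
    using descent norm_cauchy_schwarz[of g "xk - a"] by (simp add: mult.commute)
  then have tk_dist: "tk \<le> norm (xk - a)" using g_ne by simp
  obtain step: "norm (xk1 - xk) = tk" and progress: "tk\<^sup>2 \<le> (xk1 - xk) \<bullet> (a - xk)"
    using argmin_inner_cball_step[OF X_convex a g_ne descent xk1] by blast
  have "(norm (xk1 - a))\<^sup>2 = (norm (xk1 - xk))\<^sup>2 - 2 * ((xk1 - xk) \<bullet> (a - xk)) + (norm (xk - a))\<^sup>2"
    unfolding power2_norm_eq_inner by (simp add: inner_diff_left inner_diff_right inner_commute)
  also have "\<dots> \<le> (norm (xk - a))\<^sup>2 - tk\<^sup>2" using step progress by simp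
  finally show ?thesis using tk_dist step by (simp add: a_def)
qed

end
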